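(* Let $(P,\cdot)$ be a strong order-preserving partial action of a monoid $T$ on a poset $P$. Then there is a globalisation $(\iota,\mathbf{P},\diamond)$ of $(P,\cdot)$ such that $\mathbf{P}$ is a poset, $\iota:P\to\mathbf{P}$ is an order-embedding whose image $P\iota$ is an order ideal of $\mathbf{P}$, and $(\mathbf{P},\diamond)$ is an order-preserving (total) action of $T$.
   Context: A partial action of a monoid $T$ on a set $X$ is a partial map $T\times X\to X$, $(t,x)\mapsto t\cdot x$, such that $1\cdot x$ is defined and equals $x$ for all $x$, and whenever $t\cdot x$ and $s\cdot(t\cdot x)$ are defined, $st\cdot x$ is defined and $s\cdot(t\cdot x)=st\cdot x$. It is an action if $t\cdot x$ is always defined. It is strong if whenever $t\cdot x$ and $st\cdot x$ are defined, $s\cdot(t\cdot x)$ is defined. A (partial) action on a poset is order-preserving if whenever $x\le y$ and $t\cdot y$ is defined, $t\cdot x$ is defined and $t\cdot x\le t\cdot y$. A globalisation of a partial action $(X,\cdot)$ of $T$ is a triple $(\iota,\mathbf{X},\ast)$ with $\iota:X\to\mathbf{X}$ injective and $(\mathbf{X},\ast)$ an action of $T$ such that for all $t\in T$, $x\in X$: $t\cdot x$ is defined iff $t\ast x\iota\in X\iota$, and in that case $(t\cdot x)\iota=t\ast x\iota$. An order ideal of a poset is a down-closed subset. *)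

theory Defs
  imports Main
begin

definition partial_action :: "'a set \<Rightarrow> ('m::monoid_mult \<Rightarrow> 'a \<Rightarrow> 'a option) \<Rightarrow> bool" where
  "partial_action X act \<longleftrightarrow>
     (\<forall>t x y. act t x = Some y \<longrightarrow> x \<in> X \<and> y \<in> X) \<and>
     (\<forall>x\<in>X. act 1 x = Some x) \<and>
     (\<forall>s t x y z. act t x = Some y \<longrightarrow> act s y = Some z \<longrightarrow> act (s * t) x = Some z)"

definition strong_partial_action :: "('m::monoid_mult \<Rightarrow> 'a \<Rightarrow> 'a option) \<Rightarrow> bool" where
  "strong_partial_action act \<longleftrightarrow>
     (\<forall>s t x y. act t x = Some y \<longrightarrow> act (s * t) x \<noteq> None \<longrightarrow> act s y \<noteq> None)"

definition order_preserving_partial_action ::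
    "'a rel \<Rightarrow> ('m \<Rightarrow> 'a \<Rightarrow> 'a option) \<Rightarrow> bool" where
  "order_preserving_partial_action le act \<longleftrightarrow>
     (\<forall>t x y y'. (x, y) \<in> le \<longrightarrow> act t y = Some y' \<longrightarrow>
        (\<exists>x'. act t x = Some x' \<and> (x', y') \<in> le))"

definition monoid_action :: "'b set \<Rightarrow> ('m::monoid_mult \<Rightarrow> 'b \<Rightarrow> 'b) \<Rightarrow> bool" where
  "monoid_action Y act \<longleftrightarrow>
     (\<forall>t. \<forall>y\<in>Y. act t y \<in> Y) \<and>
     (\<forall>y\<in>Y. act 1 y = y) \<and>
     (\<forall>s t. \<forall>y\<in>Y. act s (act t y) = act (s * t) y)"

definition order_preserving_action :: "'b set \<Rightarrow> 'b rel \<Rightarrow> ('m \<Rightarrow> 'b \<Rightarrow> 'b) \<Rightarrow> bool" where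
  "order_preserving_action Y le act \<longleftrightarrow>
     (\<forall>t. \<forall>x\<in>Y. \<forall>y\<in>Y. (x, y) \<in> le \<longrightarrow> (act t x, act t y) \<in> le)"

definition globalisation ::
    "'a set \<Rightarrow> ('m::monoid_mult \<Rightarrow> 'a \<Rightarrow> 'a option) \<Rightarrow> ('a \<Rightarrow> 'b) \<Rightarrow> 'b set \<Rightarrow> ('m \<Rightarrow> 'b \<Rightarrow> 'b) \<Rightarrow> bool" where
  "globalisation X act iota Y star \<longleftrightarrow>
     inj_on iota X \<and> iota ` X \<subseteq> Y \<and> monoid_action Y star \<and>
     (\<forall>t. \<forall>x\<in>X. (act t x \<noteq> None \<longleftrightarrow> star t (iota x) \<in> iota ` X) \<and>
                  (act t x \<noteq> None \<longrightarrow> iota (the (act t x)) = star t (iota x)))"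

definition order_embedding :: "'a set \<Rightarrow> 'a rel \<Rightarrow> 'b rel \<Rightarrow> ('a \<Rightarrow> 'b) \<Rightarrow> bool" where
  "order_embedding X le le' f \<longleftrightarrow>
     (\<forall>x\<in>X. \<forall>y\<in>X. (x, y) \<in> le \<longleftrightarrow> (f x, f y) \<in> le')"

definition order_ideal :: "'b set \<Rightarrow> 'b rel \<Rightarrow> 'b set \<Rightarrow> bool" where
  "order_ideal Y le I \<longleftrightarrow> I \<subseteq> Y \<and> (\<forall>y\<in>Y. \<forall>z\<in>I. (y, z) \<in> le \<longrightarrow> y \<in> I)"

end

theory Submission
  imports Defs
begin

text \<open>A point \<open>x\<close> is represented by the graph of the partial map \<open>u \<mapsto> u\<cdot>x\<close>, and the
  formal translate of \<open>x\<close> by \<open>t\<close> by the graph of \<open>u \<mapsto> (u t)\<cdot>x\<close>; the monoid acts on these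
  graphs by translating the first coordinate.  Strongness (together with the composition axiom)
  ensures that, when \<open>t\<cdot>x = y\<close> is defined, the graph of \<open>u \<mapsto> (u t)\<cdot>x\<close> coincides with that
  of \<open>u \<mapsto> u\<cdot>y\<close>, so the total action extends the partial one.  Order preservation
  of the partial action makes the embedding monotone, and a graph below the graph of a point is
  defined at \<open>1\<close>, hence is itself the graph of a point.\<close>

definition shifted_graph :: "('m::monoid_mult \<Rightarrow> 'a \<Rightarrow> 'a option) \<Rightarrow> 'm \<Rightarrow> 'a \<Rightarrow> ('m \<times> 'a) set" where
  "shifted_graph act t x = {(u, y). act (u * t) x = Some y}"

abbreviation point_graph :: "('m::monoid_mult \<Rightarrow> 'a \<Rightarrow> 'a option) \<Rightarrow> 'a \<Rightarrow> ('m \<times> 'a) set" where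
  "point_graph act x \<equiv> shifted_graph act 1 x"

definition shifted_graphs :: "'a set \<Rightarrow> ('m::monoid_mult \<Rightarrow> 'a \<Rightarrow> 'a option) \<Rightarrow> ('m \<times> 'a) set set" where
  "shifted_graphs X act = {shifted_graph act t x | t x. x \<in> X}"

definition shift :: "'m::monoid_mult \<Rightarrow> ('m \<times> 'a) set \<Rightarrow> ('m \<times> 'a) set" where
  "shift t S = {(u, y). (u * t, y) \<in> S}"

definition graph_order ::
    "'a set \<Rightarrow> ('m::monoid_mult \<Rightarrow> 'a \<Rightarrow> 'a option) \<Rightarrow> 'a rel \<Rightarrow> ('m \<times> 'a) set rel" where
  "graph_order X act le =
     {(S, S'). S \<in> shifted_graphs X act \<and> S' \<in> shifted_graphs X act \<and>
        (\<forall>u y'. (u, y') \<in> S' \<longrightarrow> (\<exists>y. (u, y) \<in> S \<and> (y, y') \<in> le))}"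

lemma partial_action_mult:
  "partial_action X act \<Longrightarrow> act t x = Some y \<Longrightarrow> act s y = Some z \<Longrightarrow> act (s * t) x = Some z"
  unfolding partial_action_def by blast

lemma partial_action_closed:
  "partial_action X act \<Longrightarrow> act t x = Some y \<Longrightarrow> x \<in> X \<and> y \<in> X"
  unfolding partial_action_def by blast

lemma partial_action_one: "partial_action X act \<Longrightarrow> x \<in> X \<Longrightarrow> act 1 x = Some x"
  unfolding partial_action_def by blast

lemma mem_shifted_graph_iff: "(u, y) \<in> shifted_graph act t x \<longleftrightarrow> act (u * t) x = Some y"
  by (simp add: shifted_graph_def)

lemma mem_point_graph_iff: "(u, y) \<in> point_graph act x \<longleftrightarrow> act u x = Some y"
  by (simp add: mem_shifted_graph_iff)

lemma shifted_graph_functional: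
  "(u, y) \<in> shifted_graph act t x \<Longrightarrow> (u, y') \<in> shifted_graph act t x \<Longrightarrow> y = y'"
  by (simp add: mem_shifted_graph_iff)

lemma shifted_graph_values:
  assumes "partial_action X act" "(u, y) \<in> shifted_graph act t x"
  shows "y \<in> X"
  using partial_action_closed[OF assms(1)] assms(2) by (simp add: mem_shifted_graph_iff)

lemma self_mem_point_graph:
  assumes "partial_action X act" "x \<in> X"
  shows "(1, x) \<in> point_graph act x"
  using partial_action_one[OF assms] by (simp add: mem_point_graph_iff)

lemma shift_shifted_graph: "shift s (shifted_graph act t x) = shifted_graph act (s * t) x"
  by (simp add: shift_def shifted_graph_def mult.assoc)

lemma shift_mem_shifted_graphs: "S \<in> shifted_graphs X act \<Longrightarrow> shift t S \<in> shifted_graphs X act"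
  unfolding shifted_graphs_def by (auto simp: shift_shifted_graph) blast

lemma point_graph_mem_shifted_graphs: "x \<in> X \<Longrightarrow> point_graph act x \<in> shifted_graphs X act"
  unfolding shifted_graphs_def by blast

lemma shifted_graph_eq_point_graph:
  assumes pa: "partial_action X act" and strong: "strong_partial_action act"
    and txy: "act t x = Some y"
  shows "shifted_graph act t x = point_graph act y"
proof (rule set_eqI, clarify)
  fix u z
  show "(u, z) \<in> shifted_graph act t x \<longleftrightarrow> (u, z) \<in> point_graph act y"
  proof
    assume "(u, z) \<in> shifted_graph act t x"
    then have utx: "act (u * t) x = Some z"
      by (simp add: mem_shifted_graph_iff)
    then obtain w where uy: "act u y = Some w"
      using strong txy unfolding strong_partial_action_def by fastforce
    then have "act (u * t) x = Some w"
      using partial_action_mult[OF pa txy] by blast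
    with utx uy show "(u, z) \<in> point_graph act y"
      by (simp add: mem_point_graph_iff)
  next
    assume "(u, z) \<in> point_graph act y"
    then show "(u, z) \<in> shifted_graph act t x"
      using partial_action_mult[OF pa txy] by (simp add: mem_point_graph_iff mem_shifted_graph_iff)
  qed
qed

lemma inj_on_point_graph:
  assumes "partial_action X act"
  shows "inj_on (point_graph act) X"
proof (rule inj_onI)
  fix x y
  assume "x \<in> X" "y \<in> X" "point_graph act x = point_graph act y"
  then have "(1, x) \<in> point_graph act y"
    using self_mem_point_graph[OF assms] by metis
  with \<open>y \<in> X\<close> show "x = y"
    using shifted_graph_functional self_mem_point_graph[OF assms] by metis
qed

lemma monoid_action_shift: "monoid_action (shifted_graphs X act) shift"
  unfolding monoid_action_def
  by (simp add: shift_mem_shifted_graphs) (simp add: shift_def mult.assoc)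

lemma globalisation_shifted_graphs:
  assumes pa: "partial_action X act" and strong: "strong_partial_action act"
  shows "globalisation X act (point_graph act) (shifted_graphs X act) shift"
  unfolding globalisation_def
proof (intro conjI allI ballI impI)
  show "inj_on (point_graph act) X"
    using inj_on_point_graph[OF pa] .
  show "point_graph act ` X \<subseteq> shifted_graphs X act"
    using point_graph_mem_shifted_graphs by (rule image_subsetI)
  show "monoid_action (shifted_graphs X act) shift"
    by (rule monoid_action_shift)
  fix t x
  assume "x \<in> X"
  have shift_point: "shift t (point_graph act x) = point_graph act y" if "act t x = Some y" for y
    using shifted_graph_eq_point_graph[OF pa strong that] by (simp add: shift_shifted_graph)
  show "act t x \<noteq> None \<longleftrightarrow> shift t (point_graph act x) \<in> point_graph act ` X"
  proof
    assume "act t x \<noteq> None"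
    then obtain y where txy: "act t x = Some y"
      by auto
    then have "y \<in> X"
      using partial_action_closed[OF pa] by blast
    with shift_point[OF txy] show "shift t (point_graph act x) \<in> point_graph act ` X"
      by blast
  next
    assume "shift t (point_graph act x) \<in> point_graph act ` X"
    then obtain y where "y \<in> X" "shift t (point_graph act x) = point_graph act y"
      by blast
    then have "(1, y) \<in> shift t (point_graph act x)"
      using self_mem_point_graph[OF pa] by simp
    then show "act t x \<noteq> None"
      by (simp add: shift_def mem_point_graph_iff)
  qed
  assume "act t x \<noteq> None"
  then show "point_graph act (the (act t x)) = shift t (point_graph act x)"
    using shift_point by auto
qed

lemma antisym_graph_order:
  assumes "antisym le"
  shows "antisym (graph_order X act le)"
proof (rule antisymI)
  have included: "(u, z) \<in> S'"
    if below: "(S, S') \<in> graph_order X act le" and above: "(S', S) \<in> graph_order X act le"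
      and uz: "(u, z) \<in> S"
    for S S' u z
  proof -
    obtain t x where S: "S = shifted_graph act t x"
      using below unfolding graph_order_def shifted_graphs_def by blast
    obtain w where w: "(u, w) \<in> S'" "(w, z) \<in> le"
      using above uz unfolding graph_order_def by blast
    then obtain v where v: "(u, v) \<in> S" "(v, w) \<in> le"
      using below unfolding graph_order_def by blast
    have "v = z"
      using shifted_graph_functional S v(1) uz by metis
    with assms v(2) w(2) have "w = z"
      by (simp add: antisym_def)
    with w(1) show ?thesis
      by simp
  qed
  fix S S'
  assume "(S, S') \<in> graph_order X act le" "(S', S) \<in> graph_order X act le"
  then show "S = S'"
    using included by (intro set_eqI) (metis surj_pair)
qed

lemma partial_order_on_graph_order:
  assumes po: "partial_order_on X le" and pa: "partial_action X act"
  shows "partial_order_on (shifted_graphs X act) (graph_order X act le)"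
  unfolding partial_order_on_def preorder_on_def
proof (intro conjI)
  show "graph_order X act le \<subseteq> shifted_graphs X act \<times> shifted_graphs X act"
    unfolding graph_order_def by auto
  have "(y, y) \<in> le" if "(u, y) \<in> S" "S \<in> shifted_graphs X act" for u y S
    using that shifted_graph_values[OF pa] partial_order_onD(1)[OF po]
    unfolding shifted_graphs_def refl_on_def by blast
  then show "refl_on (shifted_graphs X act) (graph_order X act le)"
    unfolding refl_on_def graph_order_def by blast
  show "trans (graph_order X act le)"
    using partial_order_onD(2)[OF po] unfolding trans_def graph_order_def by blast
  show "antisym (graph_order X act le)"
    using antisym_graph_order partial_order_onD(3)[OF po] by blast
qed

lemma order_embedding_point_graph:
  assumes pa: "partial_action X act" and op: "order_preserving_partial_action le act"
  shows "order_embedding X le (graph_order X act le) (point_graph act)"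
  unfolding order_embedding_def
proof (intro ballI iffI)
  fix x y
  assume x: "x \<in> X" and y: "y \<in> X"
  show "(point_graph act x, point_graph act y) \<in> graph_order X act le" if "(x, y) \<in> le"
  proof -
    have "\<forall>u y'. act u y = Some y' \<longrightarrow> (\<exists>x'. act u x = Some x' \<and> (x', y') \<in> le)"
      using op that unfolding order_preserving_partial_action_def by blast
    then show ?thesis
      by (simp add: graph_order_def point_graph_mem_shifted_graphs x y mem_point_graph_iff)
  qed
  assume "(point_graph act x, point_graph act y) \<in> graph_order X act le"
  then obtain x' where "(1, x') \<in> point_graph act x" "(x', y) \<in> le"
    using self_mem_point_graph[OF pa y] unfolding graph_order_def by blast
  then show "(x, y) \<in> le"
    using shifted_graph_functional self_mem_point_graph[OF pa x] by metis
qed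

lemma order_ideal_point_graphs:
  assumes pa: "partial_action X act" and strong: "strong_partial_action act"
  shows "order_ideal (shifted_graphs X act) (graph_order X act le) (point_graph act ` X)"
  unfolding order_ideal_def
proof (intro conjI ballI impI)
  show "point_graph act ` X \<subseteq> shifted_graphs X act"
    using point_graph_mem_shifted_graphs by (rule image_subsetI)
  fix S Z
  assume "S \<in> shifted_graphs X act" "Z \<in> point_graph act ` X"
    and below: "(S, Z) \<in> graph_order X act le"
  then obtain t x z where S: "S = shifted_graph act t x" and Z: "z \<in> X" "Z = point_graph act z"
    unfolding shifted_graphs_def by blast
  then obtain y where "(1, y) \<in> S"
    using below self_mem_point_graph[OF pa] unfolding graph_order_def by blast
  then have txy: "act t x = Some y"
    by (simp add: S mem_shifted_graph_iff)
  then have "y \<in> X"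
    using partial_action_closed[OF pa] by blast
  then show "S \<in> point_graph act ` X"
    using S shifted_graph_eq_point_graph[OF pa strong txy] by blast
qed

lemma order_preserving_action_shift:
  "order_preserving_action (shifted_graphs X act) (graph_order X act le) shift"
  unfolding order_preserving_action_def graph_order_def
  by (auto simp: shift_mem_shifted_graphs) (auto simp: shift_def)

theorem mainTheorem4:
  fixes X :: "'a set" and le :: "'a rel" and act :: "'m::monoid_mult \<Rightarrow> 'a \<Rightarrow> 'a option"
  assumes "partial_order_on X le"
    and "partial_action X act"
    and "strong_partial_action act"
    and "order_preserving_partial_action le act"
  shows "\<exists>(iota :: 'a \<Rightarrow> ('m \<times> 'a) set) (Y :: ('m \<times> 'a) set set) leY star.
           globalisation X act iota Y star \<and>
           partial_order_on Y leY \<and>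
           order_embedding X le leY iota \<and>
           order_ideal Y leY (iota ` X) \<and>
           order_preserving_action Y leY star"
  using globalisation_shifted_graphs[OF assms(2,3)]
    partial_order_on_graph_order[OF assms(1,2)]
    order_embedding_point_graph[OF assms(2,4)]
    order_ideal_point_graphs[OF assms(2,3)]
    order_preserving_action_shift
  by (intro exI conjI) assumption+

end
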